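(* Let $X\subset\mathbb{R}^p$ be compact, $\rho$ a probability measure on $X\times\mathbb{R}$ with marginal $\rho_X$ and regression function $f_\rho$, and $\mathcal{K}$ a Mercer kernel. Assume that for constants $c_\rho>0$, $0<\theta\le1$: $\rho_X(\{\mathbf{x}\in X:d(\mathbf{x},\partial X)<t\})\le c_\rho t$ for all $t>0$; $\rho_X$ has a density $p$ with $\sup_Xp\le c_\rho$ and $|p(\mathbf{x})-p(\mathbf{u})|\le c_\rho\|\mathbf{x}-\mathbf{u}\|^\theta$; and $\nabla f_\rho\in\mathbb{H}^p_{\mathcal{K}}$. Let $s>0$, $r\ge1$ and $\vec f\in\mathcal{F}_r$. Then $$\frac{\widetilde M_2\, s^{p+2+\theta}}{p}\int_{X_s}\|\vec f(\mathbf{x})-\nabla f_\rho(\mathbf{x})\|^2d\rho_X(\mathbf{x})\le Q(\vec f).$$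
   Context: $d(\mathbf{x},\partial X)$ is the Euclidean distance to the boundary of $X$. $\mathbb{H}^p_{\mathcal{K}}$ is the $p$-fold product of the RKHS $\mathbb{H}_{\mathcal{K}}$ (norm $\|\cdot\|_{\mathcal{K}}$), and $\mathcal{F}_r=\{\vec f\in\mathbb{H}^p_{\mathcal{K}}:\sum_{i=1}^p\|f^i\|_{\mathcal{K}}\le r\}$. With $\omega^s(\mathbf{x})=\exp(-\|\mathbf{x}\|^2/(2s^2))$, $$Q(\vec f)=\int_X\int_X\omega^s(\mathbf{x}-\mathbf{u})\big((\vec f(\mathbf{x})-\nabla f_\rho(\mathbf{x}))\cdot(\mathbf{u}-\mathbf{x})\big)^2d\rho_X(\mathbf{x})\,d\rho_X(\mathbf{u}),$$ $X_s=\{\mathbf{x}\in X: d(\mathbf{x},\partial X)>s\text{ and }p(\mathbf{x})\ge(1+c_\rho)s^\theta\}$, and $\widetilde M_2=\int_{\|\mathbf{t}\|\le1,\ \mathbf{t}\in\mathbb{R}^p}e^{-\|\mathbf{t}\|^2/2}\|\mathbf{t}\|^2d\mathbf{t}$. *)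

theory Defs
  imports "HOL-Analysis.Analysis" "HOL-Probability.Probability"
begin

text \<open>Finite kernel expansions  sum_i a_i K(x_i, .)  represented as lists of (point, coefficient).\<close>

definition kexp_eval :: "('a \<Rightarrow> 'a \<Rightarrow> real) \<Rightarrow> ('a \<times> real) list \<Rightarrow> 'a \<Rightarrow> real" where
  "kexp_eval K L x = (\<Sum>(y, a) \<leftarrow> L. a * K y x)"

definition kexp_norm :: "('a \<Rightarrow> 'a \<Rightarrow> real) \<Rightarrow> ('a \<times> real) list \<Rightarrow> real" where
  "kexp_norm K L = sqrt (\<Sum>(x, a) \<leftarrow> L. \<Sum>(y, b) \<leftarrow> L. a * b * K x y)"

definition kexp_minus :: "('a \<times> real) list \<Rightarrow> ('a \<times> real) list \<Rightarrow> ('a \<times> real) list" where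
  "kexp_minus L M = L @ map (\<lambda>(y, b). (y, - b)) M"

definition mercer_kernel :: "'a::topological_space set \<Rightarrow> ('a \<Rightarrow> 'a \<Rightarrow> real) \<Rightarrow> bool" where
  "mercer_kernel X K \<longleftrightarrow>
     continuous_on (X \<times> X) (\<lambda>(x, y). K x y) \<and>
     (\<forall>x\<in>X. \<forall>y\<in>X. K x y = K y x) \<and>
     (\<forall>L. set (map fst L) \<subseteq> X \<longrightarrow> (\<Sum>(x, a) \<leftarrow> L. \<Sum>(y, b) \<leftarrow> L. a * b * K x y) \<ge> 0)"

text \<open>RKHS H_K on X as the completion of the span of the K(x,.), x in X:
  S is an approximating sequence for f if it is Cauchy in the pre-Hilbert norm and
  converges pointwise on X to f.\<close>

definition rkhs_approx :: "'a set \<Rightarrow> ('a \<Rightarrow> 'a \<Rightarrow> real) \<Rightarrow> ('a \<Rightarrow> real) \<Rightarrow> (nat \<Rightarrow> ('a \<times> real) list) \<Rightarrow> bool" where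
  "rkhs_approx X K f S \<longleftrightarrow>
     (\<forall>n. set (map fst (S n)) \<subseteq> X) \<and>
     (\<forall>e>0. \<exists>N. \<forall>m\<ge>N. \<forall>n\<ge>N. kexp_norm K (kexp_minus (S m) (S n)) < e) \<and>
     (\<forall>x\<in>X. (\<lambda>n. kexp_eval K (S n) x) \<longlonglongrightarrow> f x)"

definition in_rkhs :: "'a set \<Rightarrow> ('a \<Rightarrow> 'a \<Rightarrow> real) \<Rightarrow> ('a \<Rightarrow> real) \<Rightarrow> bool" where
  "in_rkhs X K f \<longleftrightarrow> (\<exists>S. rkhs_approx X K f S)"

definition rkhs_norm :: "'a set \<Rightarrow> ('a \<Rightarrow> 'a \<Rightarrow> real) \<Rightarrow> ('a \<Rightarrow> real) \<Rightarrow> real" where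
  "rkhs_norm X K f = Inf {lim (\<lambda>n. kexp_norm K (S n)) | S. rkhs_approx X K f S}"

definition F_ball :: "'a::euclidean_space set \<Rightarrow> ('a \<Rightarrow> 'a \<Rightarrow> real) \<Rightarrow> real \<Rightarrow> ('a \<Rightarrow> 'a) set" where
  "F_ball X K r = {f. (\<forall>i\<in>Basis. in_rkhs X K (\<lambda>x. f x \<bullet> i)) \<and>
                      (\<Sum>i\<in>Basis. rkhs_norm X K (\<lambda>x. f x \<bullet> i)) \<le> r}"

definition omega :: "real \<Rightarrow> 'a::real_normed_vector \<Rightarrow> real" where
  "omega s x = exp (- (norm x)\<^sup>2 / (2 * s\<^sup>2))"

definition Q_fun :: "'a::euclidean_space set \<Rightarrow> 'a measure \<Rightarrow> real \<Rightarrow> ('a \<Rightarrow> 'a) \<Rightarrow> ('a \<Rightarrow> 'a) \<Rightarrow> real" where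
  "Q_fun X \<mu> s g f =
     (LINT u:X|\<mu>. (LINT x:X|\<mu>. omega s (x - u) * ((f x - g x) \<bullet> (u - x))\<^sup>2))"

definition X_s :: "'a::euclidean_space set \<Rightarrow> ('a \<Rightarrow> real) \<Rightarrow> real \<Rightarrow> real \<Rightarrow> real \<Rightarrow> 'a set" where
  "X_s X pd c \<theta> s = {x\<in>X. infdist x (frontier X) > s \<and> pd x \<ge> (1 + c) * s powr \<theta>}"

definition M2_tilde :: "'a::euclidean_space itself \<Rightarrow> real" where
  "M2_tilde _ = (LINT t:(cball (0::'a) 1)|lborel. exp (- (norm t)\<^sup>2 / 2) * (norm t)\<^sup>2)"

end

theory Submission
  imports Defs
begin

(*
  By Tonelli, Q(f) integrates over x the inner integral of
  u |-> omega(x - u) ((f x - grad x) . (u - x))^2 against rho_X. For x in X_s the ball of radius s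
  around x lies in X and, by the Hoelder bound on the density, p >= s^theta on it. Restricting the
  inner integral to this ball and substituting u = x + s t leaves
  s^(p+2+theta) * integral over |t| <= 1 of exp(-|t|^2/2) (h . t)^2 dt,  h = f x - grad x,
  and since the weight is invariant under reflecting and permuting coordinates this equals
  s^(p+2+theta) |h|^2 M2/p. The RKHS hypotheses only serve to make f - grad bounded and Borel on X,
  so that the Bochner integrals defining Q agree with nonnegative ones.
*)

section \<open>Kernel expansions and functions in the RKHS\<close>

lemma quadratic_nonneg_imp_discrim_le:
  fixes q e k :: real
  assumes "0 \<le> k" and nonneg: "\<And>t. 0 \<le> q + 2 * t * e + t\<^sup>2 * k"
  shows "e\<^sup>2 \<le> q * k"
proof (cases "k = 0")
  case True
  have "e = 0"
  proof (rule ccontr)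
    assume "e \<noteq> 0"
    with nonneg[of "- (q + 1) / (2 * e)"] True show False by (simp add: field_simps)
  qed
  with True show ?thesis by simp
next
  case False
  with \<open>0 \<le> k\<close> have "k > 0" by simp
  have "0 \<le> q + 2 * (- e / k) * e + (- e / k)\<^sup>2 * k" by (rule nonneg)
  also have "\<dots> = q - e\<^sup>2 / k" using \<open>k > 0\<close> by (simp add: field_simps power2_eq_square)
  finally show ?thesis using \<open>k > 0\<close> by (simp add: field_simps)
qed

definition kexp_gram :: "('a \<Rightarrow> 'a \<Rightarrow> real) \<Rightarrow> ('a \<times> real) list \<Rightarrow> real" where
  "kexp_gram K L = (\<Sum>(x, a) \<leftarrow> L. \<Sum>(y, b) \<leftarrow> L. a * b * K x y)"

lemma kexp_gram_snoc:
  assumes "\<And>y. y \<in> fst ` set L \<Longrightarrow> K x y = K y x"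
  shows "kexp_gram K (L @ [(x, t)]) = kexp_gram K L + 2 * t * kexp_eval K L x + t\<^sup>2 * K x x"
proof -
  have "(\<Sum>(y, a) \<leftarrow> L. a * t * K y x) = t * kexp_eval K L x"
    unfolding kexp_eval_def by (induction L) (auto simp: algebra_simps)
  moreover have "(\<Sum>(y, b) \<leftarrow> L. t * b * K x y) = t * kexp_eval K L x"
    using assms unfolding kexp_eval_def by (induction L) (auto simp: algebra_simps)
  ultimately show ?thesis
    unfolding kexp_gram_def
    by (simp add: case_prod_unfold sum_list_addf algebra_simps power2_eq_square)
qed

lemma mercer_kernel_gram_nonneg:
  "mercer_kernel X K \<Longrightarrow> fst ` set L \<subseteq> X \<Longrightarrow> 0 \<le> kexp_gram K L"
  unfolding mercer_kernel_def kexp_gram_def by simp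

lemma mercer_kernel_diag_nonneg: "mercer_kernel X K \<Longrightarrow> x \<in> X \<Longrightarrow> 0 \<le> K x x"
  using mercer_kernel_gram_nonneg[of X K "[(x, 1)]"] by (simp add: kexp_gram_def)

lemma kexp_norm_sq: "mercer_kernel X K \<Longrightarrow> fst ` set L \<subseteq> X \<Longrightarrow> (kexp_norm K L)\<^sup>2 = kexp_gram K L"
  by (simp add: kexp_norm_def kexp_gram_def[symmetric] mercer_kernel_gram_nonneg)

lemma kexp_eval_sq_le:
  assumes K: "mercer_kernel X K" and L: "fst ` set L \<subseteq> X" and x: "x \<in> X"
  shows "(kexp_eval K L x)\<^sup>2 \<le> (kexp_norm K L)\<^sup>2 * K x x"
proof -
  have "0 \<le> kexp_gram K L + 2 * t * kexp_eval K L x + t\<^sup>2 * K x x" for t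
  proof -
    have "0 \<le> kexp_gram K (L @ [(x, t)])" using K L x by (intro mercer_kernel_gram_nonneg) auto
    also have "\<dots> = kexp_gram K L + 2 * t * kexp_eval K L x + t\<^sup>2 * K x x"
      using K L x by (intro kexp_gram_snoc) (auto simp: mercer_kernel_def)
    finally show ?thesis .
  qed
  then show ?thesis
    using quadratic_nonneg_imp_discrim_le mercer_kernel_diag_nonneg[OF K x] kexp_norm_sq[OF K L] by simp
qed

lemma kexp_norm_nonneg: "mercer_kernel X K \<Longrightarrow> fst ` set L \<subseteq> X \<Longrightarrow> 0 \<le> kexp_norm K L"
  by (simp add: kexp_norm_def kexp_gram_def[symmetric] mercer_kernel_gram_nonneg)

lemma kexp_eval_abs_le:
  assumes K: "mercer_kernel X K" and L: "fst ` set L \<subseteq> X" and x: "x \<in> X"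
  shows "\<bar>kexp_eval K L x\<bar> \<le> kexp_norm K L * sqrt (K x x)"
proof -
  have "\<bar>kexp_eval K L x\<bar> = sqrt ((kexp_eval K L x)\<^sup>2)" by simp
  also have "\<dots> \<le> sqrt ((kexp_norm K L)\<^sup>2 * K x x)"
    using kexp_eval_sq_le[OF assms] by (rule real_sqrt_le_mono)
  also have "\<dots> = kexp_norm K L * sqrt (K x x)"
    using kexp_norm_nonneg[OF K L] by (simp add: real_sqrt_mult)
  finally show ?thesis .
qed

lemma kexp_eval_minus: "kexp_eval K (kexp_minus L M) x = kexp_eval K L x - kexp_eval K M x"
  unfolding kexp_eval_def kexp_minus_def by (induction M) (auto simp: case_prod_unfold o_def)

lemma continuous_on_kexp_eval:
  assumes K: "mercer_kernel X K" and L: "fst ` set L \<subseteq> X"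
  shows "continuous_on X (kexp_eval K L)"
proof -
  have KC: "continuous_on (X \<times> X) (\<lambda>(x, y). K x y)" using K unfolding mercer_kernel_def by blast
  have "continuous_on X (K y)" if "y \<in> X" for y
    using continuous_on_compose2[OF KC continuous_on_Pair[OF continuous_on_const continuous_on_id]] that
    by auto
  then show ?thesis
    using L unfolding kexp_eval_def by (induction L) (auto intro!: continuous_intros)
qed

lemma in_rkhs_bounded:
  assumes X: "compact X" and K: "mercer_kernel X K" and \<phi>: "in_rkhs X K \<phi>"
  obtains B where "\<And>x. x \<in> X \<Longrightarrow> \<bar>\<phi> x\<bar> \<le> B"
proof -
  obtain S where S: "rkhs_approx X K \<phi> S" using \<phi> unfolding in_rkhs_def by blast
  have SX: "\<And>n. fst ` set (S n) \<subseteq> X"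
    and cauchy: "\<And>e. e > 0 \<Longrightarrow> \<exists>N. \<forall>m\<ge>N. \<forall>n\<ge>N. kexp_norm K (kexp_minus (S m) (S n)) < e"
    and lim: "\<And>x. x \<in> X \<Longrightarrow> (\<lambda>n. kexp_eval K (S n) x) \<longlonglongrightarrow> \<phi> x"
    using S unfolding rkhs_approx_def by auto
  have "continuous_on (X \<times> X) (\<lambda>(x, y). K x y)" using K unfolding mercer_kernel_def by blast
  then have "continuous_on X (\<lambda>x. K x x)"
    using continuous_on_compose2[OF _ continuous_on_Pair[OF continuous_on_id continuous_on_id]] by fastforce
  then have "bounded ((\<lambda>x. K x x) ` X)" using X compact_continuous_image compact_imp_bounded by blast
  then obtain Bk where Bk: "\<And>x. x \<in> X \<Longrightarrow> K x x \<le> Bk"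
    unfolding bounded_iff by (metis abs_le_D1 image_eqI real_norm_def)
  obtain N where N: "\<And>m. m \<ge> N \<Longrightarrow> kexp_norm K (kexp_minus (S m) (S N)) < 1"
    using cauchy[of 1] by auto
  have "bounded (kexp_eval K (S N) ` X)"
    using X continuous_on_kexp_eval[OF K SX] compact_continuous_image compact_imp_bounded by blast
  then obtain B0 where B0: "\<And>x. x \<in> X \<Longrightarrow> \<bar>kexp_eval K (S N) x\<bar> \<le> B0" unfolding bounded_iff by fastforce
  have close: "\<bar>kexp_eval K (S m) x - kexp_eval K (S N) x\<bar> \<le> sqrt Bk" if "m \<ge> N" "x \<in> X" for m x
  proof -
    define L where "L = kexp_minus (S m) (S N)"
    have LX: "fst ` set L \<subseteq> X" using SX[of m] SX[of N] by (auto simp: L_def kexp_minus_def)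
    have "\<bar>kexp_eval K (S m) x - kexp_eval K (S N) x\<bar> \<le> kexp_norm K L * sqrt (K x x)"
      using kexp_eval_abs_le[OF K LX \<open>x \<in> X\<close>] by (simp add: L_def kexp_eval_minus)
    also have "\<dots> \<le> 1 * sqrt Bk"
      using N[OF \<open>m \<ge> N\<close>] Bk[OF \<open>x \<in> X\<close>] kexp_norm_nonneg[OF K LX]
        mercer_kernel_diag_nonneg[OF K \<open>x \<in> X\<close>]
      by (intro mult_mono) (auto simp: L_def)
    finally show ?thesis by simp
  qed
  have "\<bar>\<phi> x\<bar> \<le> B0 + sqrt Bk" if "x \<in> X" for x
  proof (rule LIMSEQ_le_const2[OF tendsto_rabs[OF lim[OF that]]])
    show "\<exists>N'. \<forall>m\<ge>N'. \<bar>kexp_eval K (S m) x\<bar> \<le> B0 + sqrt Bk"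
      using close[OF _ that] B0[OF that] by (intro exI[of _ N]) force
  qed
  then show ?thesis by (rule that)
qed

lemma in_rkhs_borel_measurable:
  fixes X :: "'a::euclidean_space set"
  assumes X: "compact X" and K: "mercer_kernel X K" and \<phi>: "in_rkhs X K \<phi>"
  shows "(\<lambda>x. indicator X x * \<phi> x) \<in> borel_measurable borel"
proof -
  obtain S where S: "rkhs_approx X K \<phi> S" using \<phi> unfolding in_rkhs_def by blast
  have SX: "\<And>n. fst ` set (S n) \<subseteq> X"
    and lim: "\<And>x. x \<in> X \<Longrightarrow> (\<lambda>n. kexp_eval K (S n) x) \<longlonglongrightarrow> \<phi> x"
    using S unfolding rkhs_approx_def by auto
  have [measurable]: "X \<in> sets borel" using X by (simp add: compact_imp_closed)
  show ?thesis
  proof (rule borel_measurable_LIMSEQ_real)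
    show "(\<lambda>n. indicator X x * kexp_eval K (S n) x) \<longlonglongrightarrow> indicator X x * \<phi> x" for x
      using lim[of x] by (cases "x \<in> X") simp_all
    show "(\<lambda>x. indicator X x * kexp_eval K (S n) x) \<in> borel_measurable borel" for n
      using borel_measurable_continuous_on_indicator[OF _ continuous_on_kexp_eval[OF K SX]]
      by simp
  qed
qed

lemma rkhs_field_bounded:
  assumes X: "compact X" and K: "mercer_kernel X K"
    and v: "\<And>i. i \<in> Basis \<Longrightarrow> in_rkhs X K (\<lambda>x. v x \<bullet> i)"
  obtains B where "\<And>x. x \<in> X \<Longrightarrow> norm (v x) \<le> B"
proof -
  have "\<forall>i\<in>Basis. \<exists>B. \<forall>x\<in>X. \<bar>v x \<bullet> i\<bar> \<le> B"
    by (metis in_rkhs_bounded[OF X K v])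
  then obtain B where B: "\<And>i x. i \<in> Basis \<Longrightarrow> x \<in> X \<Longrightarrow> \<bar>v x \<bullet> i\<bar> \<le> B i" by metis
  have "norm (v x) \<le> (\<Sum>i\<in>Basis. B i)" if "x \<in> X" for x
    using norm_le_l1[of "v x"] sum_mono[of Basis "\<lambda>i. \<bar>v x \<bullet> i\<bar>" B] B[OF _ that] by fastforce
  then show ?thesis by (rule that)
qed

lemma rkhs_field_borel_measurable:
  fixes v :: "'a::euclidean_space \<Rightarrow> 'a"
  assumes X: "compact X" and K: "mercer_kernel X K"
    and v: "\<And>i. i \<in> Basis \<Longrightarrow> in_rkhs X K (\<lambda>x. v x \<bullet> i)"
  shows "(\<lambda>x. indicator X x *\<^sub>R v x) \<in> borel_measurable borel"
  by (subst borel_measurable_euclidean_space) (simp add: in_rkhs_borel_measurable[OF X K v])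

section \<open>Quadratic moments of radial weights\<close>

lemma power2_norm_eq_sum_Basis: "(norm x)\<^sup>2 = (\<Sum>b\<in>Basis. (x \<bullet> b)\<^sup>2)"
  unfolding power2_norm_eq_inner euclidean_inner[of x x] by (simp add: power2_eq_square)

lemma integral_lborel_distr_invariant:
  fixes F :: "'a::euclidean_space \<Rightarrow> real"
  assumes T: "distr lborel borel T = lborel" "T \<in> borel_measurable borel"
    and F: "F \<in> borel_measurable borel"
  shows "(\<integral>w. F (T w) \<partial>lborel) = (\<integral>w. F w \<partial>lborel)"
  using integral_distr[of T lborel borel F] T F by simp

definition reflect_coord :: "'a::euclidean_space \<Rightarrow> 'a \<Rightarrow> 'a" where
  "reflect_coord i x = (\<Sum>b\<in>Basis. ((if b = i then -1 else 1) * (x \<bullet> b)) *\<^sub>R b)"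

lemma inner_reflect_coord: "b \<in> Basis \<Longrightarrow> reflect_coord i x \<bullet> b = (if b = i then - (x \<bullet> b) else x \<bullet> b)"
  unfolding reflect_coord_def by simp

lemma borel_measurable_reflect_coord [measurable]: "reflect_coord i \<in> borel_measurable borel"
  unfolding reflect_coord_def by measurable

lemma norm_reflect_coord: "norm (reflect_coord i x) = norm x"
proof -
  have "(norm (reflect_coord i x))\<^sup>2 = (norm x)\<^sup>2"
    unfolding power2_norm_eq_sum_Basis by (intro sum.cong) (auto simp: inner_reflect_coord)
  then show ?thesis by simp
qed

lemma lborel_distr_reflect_coord: "distr lborel borel (reflect_coord i) = (lborel :: 'a::euclidean_space measure)"
proof -
  have "(lborel :: 'a measure) = density (distr lborel borel (\<lambda>x. 0 + (\<Sum>j\<in>Basis. ((if j = i then -1 else 1) * (x \<bullet> j)) *\<^sub>R j)))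
         (\<lambda>_. (\<Prod>j\<in>Basis. \<bar>(if j = i then -1 else 1)::real\<bar>))"
    by (rule lborel_affine_euclidean) auto
  also have "(\<lambda>x. 0 + (\<Sum>j\<in>Basis. ((if j = i then -1 else 1) * (x \<bullet> j)) *\<^sub>R j)) = reflect_coord i"
    by (simp add: reflect_coord_def fun_eq_iff)
  also have "(\<lambda>_. ennreal (\<Prod>j\<in>Basis. \<bar>(if j = i then -1 else 1)::real\<bar>)) = (\<lambda>_. 1)"
    by (simp add: if_distrib cong: if_cong)
  finally show ?thesis by (simp add: density_1)
qed

definition permute_coords :: "('a::euclidean_space \<Rightarrow> 'a) \<Rightarrow> 'a \<Rightarrow> 'a" where
  "permute_coords \<tau> x = (\<Sum>b\<in>Basis. (x \<bullet> \<tau> b) *\<^sub>R b)"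

lemma inner_permute_coords: "b \<in> Basis \<Longrightarrow> permute_coords \<tau> x \<bullet> b = x \<bullet> \<tau> b"
  unfolding permute_coords_def by simp

lemma borel_measurable_permute_coords [measurable]: "permute_coords \<tau> \<in> borel_measurable borel"
  unfolding permute_coords_def by measurable

lemma norm_permute_coords:
  assumes "bij_betw \<tau> Basis Basis"
  shows "norm (permute_coords \<tau> x) = norm x"
proof -
  have "(norm (permute_coords \<tau> x))\<^sup>2 = (\<Sum>b\<in>Basis. (x \<bullet> \<tau> b)\<^sup>2)"
    unfolding power2_norm_eq_sum_Basis by (intro sum.cong) (auto simp: inner_permute_coords)
  also have "\<dots> = (norm x)\<^sup>2"
    unfolding power2_norm_eq_sum_Basis by (rule sum.reindex_bij_betw[OF assms])
  finally show ?thesis by simp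
qed

lemma lborel_distr_permute_coords:
  fixes \<tau> :: "'a::euclidean_space \<Rightarrow> 'a"
  assumes bij: "bij_betw \<tau> Basis Basis" and inv: "\<And>b. b \<in> Basis \<Longrightarrow> \<tau> (\<tau> b) = b"
  shows "distr lborel borel (permute_coords \<tau>) = lborel"
proof (rule lborel_eqI[symmetric])
  have \<tau>B: "\<And>b. b \<in> Basis \<Longrightarrow> \<tau> b \<in> Basis" using bij bij_betwE by blast
  fix l u :: 'a assume le: "\<And>b. b \<in> Basis \<Longrightarrow> l \<bullet> b \<le> u \<bullet> b"
  have "permute_coords \<tau> -` box l u = box (permute_coords \<tau> l) (permute_coords \<tau> u)"
    unfolding set_eq_iff mem_box vimage_eq inner_permute_coords
    by (metis \<tau>B inv inner_permute_coords)
  moreover have "(\<Prod>b\<in>Basis. (permute_coords \<tau> u - permute_coords \<tau> l) \<bullet> b) = (\<Prod>b\<in>Basis. (u - l) \<bullet> b)"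
    using prod.reindex_bij_betw[OF bij, of "\<lambda>b. (u - l) \<bullet> b"]
    by (simp add: inner_diff_left inner_permute_coords)
  ultimately show "emeasure (distr lborel borel (permute_coords \<tau>)) (box l u) = (\<Prod>b\<in>Basis. (u - l) \<bullet> b)"
    using le \<tau>B by (simp add: emeasure_distr emeasure_lborel_box_eq inner_permute_coords)
qed simp

lemma integral_radial_coord_product_eq_0:
  fixes g :: "real \<Rightarrow> real" and i j :: "'a::euclidean_space"
  assumes [measurable]: "g \<in> borel_measurable borel"
    and "i \<in> Basis" "j \<in> Basis" "i \<noteq> j"
  shows "(\<integral>w. g (norm w) * ((w \<bullet> i) * (w \<bullet> j)) \<partial>lborel) = 0"
proof -
  let ?F = "\<lambda>w::'a. g (norm w) * ((w \<bullet> i) * (w \<bullet> j))"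
  have "(\<integral>w. ?F w \<partial>lborel) = (\<integral>w. ?F (reflect_coord i w) \<partial>lborel)"
    by (rule integral_lborel_distr_invariant[symmetric, OF lborel_distr_reflect_coord]) measurable
  also have "\<dots> = - (\<integral>w. ?F w \<partial>lborel)"
    using assms by (simp add: inner_reflect_coord norm_reflect_coord)
  finally show ?thesis by simp
qed

lemma integral_radial_coord_square_eq:
  fixes g :: "real \<Rightarrow> real" and i j :: "'a::euclidean_space"
  assumes [measurable]: "g \<in> borel_measurable borel"
    and i: "i \<in> Basis" and j: "j \<in> Basis"
  shows "(\<integral>w. g (norm w) * (w \<bullet> i)\<^sup>2 \<partial>lborel) = (\<integral>w. g (norm w) * (w \<bullet> j)\<^sup>2 \<partial>lborel)"
proof -
  define \<tau> where "\<tau> b = (if b = i then j else if b = j then i else b)" for b :: 'a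
  have inv: "\<And>b. \<tau> (\<tau> b) = b" by (simp add: \<tau>_def)
  have bij: "bij_betw \<tau> Basis Basis"
    by (rule bij_betw_byWitness[of Basis \<tau> \<tau>]) (use inv i j in \<open>auto simp: \<tau>_def\<close>)
  let ?F = "\<lambda>w::'a. g (norm w) * (w \<bullet> i)\<^sup>2"
  have "(\<integral>w. ?F w \<partial>lborel) = (\<integral>w. ?F (permute_coords \<tau> w) \<partial>lborel)"
    by (rule integral_lborel_distr_invariant[symmetric, OF lborel_distr_permute_coords[OF bij inv]])
      measurable
  also have "\<dots> = (\<integral>w. g (norm w) * (w \<bullet> j)\<^sup>2 \<partial>lborel)"
    using i by (simp add: inner_permute_coords norm_permute_coords[OF bij] \<tau>_def)
  finally show ?thesis .
qed

lemma integrable_radial_coord_product: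
  fixes g :: "real \<Rightarrow> real" and i j :: "'a::euclidean_space"
  assumes [measurable]: "g \<in> borel_measurable borel"
    and int: "integrable lborel (\<lambda>w::'a. g (norm w) * (norm w)\<^sup>2)"
    and i: "i \<in> Basis" and j: "j \<in> Basis"
  shows "integrable lborel (\<lambda>w. g (norm w) * ((w \<bullet> i) * (w \<bullet> j)))"
proof (rule Bochner_Integration.integrable_bound[OF int])
  show "AE w in lborel. norm (g (norm w) * ((w \<bullet> i) * (w \<bullet> j))) \<le> norm (g (norm w) * (norm w)\<^sup>2)"
    using Basis_le_norm[OF i] Basis_le_norm[OF j]
    by (auto simp: abs_mult power2_eq_square intro!: mult_left_mono mult_mono)
qed measurable

lemma integral_radial_quadratic:
  fixes g :: "real \<Rightarrow> real" and v :: "'a::euclidean_space"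
  assumes g[measurable]: "g \<in> borel_measurable borel"
    and int: "integrable lborel (\<lambda>w::'a. g (norm w) * (norm w)\<^sup>2)"
  shows "(\<integral>w. g (norm w) * (v \<bullet> w)\<^sup>2 \<partial>lborel)
       = (norm v)\<^sup>2 / DIM('a) * (\<integral>w. g (norm (w::'a)) * (norm w)\<^sup>2 \<partial>lborel)"
proof -
  obtain b0 :: 'a where b0: "b0 \<in> Basis" using nonempty_Basis by blast
  define I where "I = (\<integral>w. g (norm w) * (w \<bullet> b0)\<^sup>2 \<partial>lborel)"
  have diag: "(\<integral>w. g (norm w) * ((w \<bullet> i) * (w \<bullet> i)) \<partial>lborel) = I" if "i \<in> Basis" for i :: 'a
    using integral_radial_coord_square_eq[of g i b0] that b0 by (simp add: I_def power2_eq_square)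
  have moment: "(\<integral>w. g (norm w) * ((w \<bullet> i) * (w \<bullet> j)) \<partial>lborel) = (if i = j then I else 0)"
    if "i \<in> Basis" "j \<in> Basis" for i j :: 'a
    using diag integral_radial_coord_product_eq_0[of g i j] that by simp
  note integrable = integrable_radial_coord_product[OF g int]
  have "(v \<bullet> w)\<^sup>2 = (\<Sum>i\<in>Basis. \<Sum>j\<in>Basis. (v \<bullet> i) * (v \<bullet> j) * ((w \<bullet> i) * (w \<bullet> j)))" for w
    unfolding euclidean_inner[of v w] power2_eq_square sum_product by (simp add: algebra_simps)
  then have "(\<integral>w. g (norm w) * (v \<bullet> w)\<^sup>2 \<partial>lborel)
      = (\<integral>w. (\<Sum>i\<in>Basis. \<Sum>j\<in>Basis. (v \<bullet> i) * (v \<bullet> j) * (g (norm w) * ((w \<bullet> i) * (w \<bullet> j)))) \<partial>lborel)"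
    by (simp add: sum_distrib_left algebra_simps)
  also have "\<dots> = (\<Sum>i\<in>Basis. \<Sum>j\<in>Basis. (v \<bullet> i) * (v \<bullet> j) * (if i = j then I else 0))"
    by (simp add: integrable integrable_sum moment)
  also have "\<dots> = (\<Sum>i\<in>Basis. (v \<bullet> i)\<^sup>2 * I)"
    by (simp add: if_distrib sum.delta power2_eq_square cong: if_cong)
  also have "\<dots> = (norm v)\<^sup>2 * I"
    unfolding power2_norm_eq_sum_Basis[of v] by (simp add: sum_distrib_right)
  finally have quadratic: "(\<integral>w. g (norm w) * (v \<bullet> w)\<^sup>2 \<partial>lborel) = (norm v)\<^sup>2 * I" .
  have "(\<integral>w. g (norm (w::'a)) * (norm w)\<^sup>2 \<partial>lborel)
      = (\<integral>w. (\<Sum>i\<in>Basis. g (norm (w::'a)) * ((w \<bullet> i) * (w \<bullet> i))) \<partial>lborel)"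
    unfolding power2_norm_eq_sum_Basis by (simp add: power2_eq_square sum_distrib_left)
  also have "\<dots> = DIM('a) * I"
    by (simp add: integrable diag)
  finally show ?thesis using quadratic by simp
qed

definition gauss_cutoff :: "real \<Rightarrow> real" where
  "gauss_cutoff r = indicator {..1} r * exp (- r\<^sup>2 / 2)"

lemma borel_measurable_gauss_cutoff [measurable]: "gauss_cutoff \<in> borel_measurable borel"
  unfolding gauss_cutoff_def by measurable

lemma gauss_cutoff_nonneg: "0 \<le> gauss_cutoff r"
  by (simp add: gauss_cutoff_def)

lemma gauss_cutoff_norm: "gauss_cutoff (norm w) = indicator (cball 0 1) w * exp (- (norm w)\<^sup>2 / 2)"
  by (simp add: gauss_cutoff_def indicator_def)

lemma integrable_gauss_cutoff:
  fixes p :: "'a::euclidean_space \<Rightarrow> real"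
  assumes "continuous_on UNIV p"
  shows "integrable lborel (\<lambda>w. gauss_cutoff (norm w) * p w)"
proof -
  have "continuous_on (cball 0 1) (\<lambda>w. exp (- (norm w)\<^sup>2 / 2) * p w)"
    by (intro continuous_intros continuous_on_subset[OF assms]) auto
  from borel_integrable_compact[OF compact_cball this] show ?thesis
    by (simp add: gauss_cutoff_norm mult.assoc)
qed

lemma M2_tilde_eq_gauss_cutoff:
  "M2_tilde TYPE('a::euclidean_space) = (\<integral>w. gauss_cutoff (norm (w::'a)) * (norm w)\<^sup>2 \<partial>lborel)"
  unfolding M2_tilde_def set_lebesgue_integral_def by (simp add: gauss_cutoff_norm mult.assoc)

lemma M2_tilde_nonneg: "0 \<le> M2_tilde TYPE('a::euclidean_space)"
  unfolding M2_tilde_eq_gauss_cutoff by (simp add: gauss_cutoff_nonneg)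

lemma nn_integral_cball_omega_quadratic:
  fixes x h :: "'a::euclidean_space"
  assumes s: "s > 0"
  shows "(\<integral>\<^sup>+u\<in>cball x s. ennreal (omega s (x - u) * (h \<bullet> (u - x))\<^sup>2) \<partial>lborel)
       = ennreal (s ^ (DIM('a) + 2) * (norm h)\<^sup>2 / DIM('a) * M2_tilde TYPE('a))"
proof -
  let ?F = "\<lambda>u. ennreal (omega s (x - u) * (h \<bullet> (u - x))\<^sup>2) * indicator (cball x s) u"
  have [measurable]: "cball x s \<in> sets borel" by (simp add: borel_closed)
  have [measurable]: "?F \<in> borel_measurable borel"
    unfolding omega_def by measurable
  have substitute: "?F (x + s *\<^sub>R w) = ennreal (s\<^sup>2 * (gauss_cutoff (norm w) * (h \<bullet> w)\<^sup>2))" for w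
  proof -
    have "indicator (cball x s) (x + s *\<^sub>R w) = (indicator (cball 0 1) w :: ennreal)"
      using s by (simp add: indicator_def dist_norm)
    moreover have "omega s (x - (x + s *\<^sub>R w)) = exp (- (norm w)\<^sup>2 / 2)"
      using s by (simp add: omega_def power_mult_distrib)
    moreover have "(h \<bullet> (x + s *\<^sub>R w - x))\<^sup>2 = s\<^sup>2 * (h \<bullet> w)\<^sup>2"
      by (simp add: power_mult_distrib)
    ultimately show ?thesis
      by (cases "w \<in> cball 0 1") (simp_all add: gauss_cutoff_norm mult_ac)
  qed
  have "(\<integral>\<^sup>+u. ?F u \<partial>lborel) = ennreal (s ^ DIM('a)) * (\<integral>\<^sup>+w. ?F (x + s *\<^sub>R w) \<partial>lborel)"
    using s by (subst lborel_affine[of s x]) (simp_all add: nn_integral_density nn_integral_distr nn_integral_cmult)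
  also have "(\<integral>\<^sup>+w. ?F (x + s *\<^sub>R w) \<partial>lborel) = ennreal (\<integral>w. s\<^sup>2 * (gauss_cutoff (norm w) * (h \<bullet> w)\<^sup>2) \<partial>lborel)"
    unfolding substitute
    by (intro nn_integral_eq_integral integrable_mult_right integrable_gauss_cutoff)
      (auto intro!: continuous_intros simp: gauss_cutoff_nonneg)
  also have "(\<integral>w. s\<^sup>2 * (gauss_cutoff (norm w) * (h \<bullet> w)\<^sup>2) \<partial>lborel)
      = s\<^sup>2 * ((norm h)\<^sup>2 / DIM('a) * M2_tilde TYPE('a))"
    using integral_radial_quadratic[OF borel_measurable_gauss_cutoff integrable_gauss_cutoff, of h]
    by (simp add: M2_tilde_eq_gauss_cutoff continuous_intros)
  finally show ?thesis
    using s M2_tilde_nonneg[where 'a='a] by (simp add: ennreal_mult[symmetric] power_add power2_eq_square mult_ac)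
qed

section \<open>Bounded set integrals as nonnegative integrals\<close>

lemma set_integral_eq_enn2real_set_nn_integral:
  fixes f :: "'a \<Rightarrow> real"
  assumes [measurable]: "A \<in> sets M" "f \<in> borel_measurable M" and nonneg: "\<And>x. x \<in> A \<Longrightarrow> 0 \<le> f x"
  shows "(LINT x:A|M. f x) = enn2real (\<integral>\<^sup>+x\<in>A. ennreal (f x) \<partial>M)"
proof -
  have "(LINT x:A|M. f x) = (\<integral>x. indicator A x * f x \<partial>M)"
    by (simp add: set_lebesgue_integral_def)
  also have "\<dots> = enn2real (\<integral>\<^sup>+x. ennreal (indicator A x * f x) \<partial>M)"
    using nonneg by (intro integral_eq_nn_integral) (auto simp: indicator_def)
  also have "\<dots> = enn2real (\<integral>\<^sup>+x\<in>A. ennreal (f x) \<partial>M)"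
    by (auto simp: indicator_def intro!: arg_cong[where f = enn2real] nn_integral_cong)
  finally show ?thesis .
qed

lemma (in finite_measure) set_integral_bounded:
  fixes f :: "'a \<Rightarrow> real"
  assumes A[measurable]: "A \<in> sets M" and [measurable]: "f \<in> borel_measurable M"
    and bounds: "\<And>x. x \<in> A \<Longrightarrow> 0 \<le> f x \<and> f x \<le> B"
  shows "0 \<le> (LINT x:A|M. f x)" and "(LINT x:A|M. f x) \<le> B * measure M A"
    and "ennreal (LINT x:A|M. f x) = (\<integral>\<^sup>+x\<in>A. ennreal (f x) \<partial>M)"
proof -
  have "norm (indicator A x *\<^sub>R f x) \<le> \<bar>B\<bar>" for x
    using bounds[of x] by (cases "x \<in> A") auto
  then have integrable: "set_integrable M A f"
    unfolding set_integrable_def by (intro integrable_const_bound[where B = "\<bar>B\<bar>"]) auto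
  show "0 \<le> (LINT x:A|M. f x)"
    using bounds unfolding set_lebesgue_integral_def
    by (intro Bochner_Integration.integral_nonneg) (simp add: indicator_def)
  have "(LINT x:A|M. f x) \<le> (LINT x:A|M. B)"
    using bounds integrable
    by (intro set_integral_mono) (auto simp: set_integrable_def integrable_real_indicator less_top[symmetric])
  then show "(LINT x:A|M. f x) \<le> B * measure M A"
    by (simp add: set_integral_const mult.commute)
  show "ennreal (LINT x:A|M. f x) = (\<integral>\<^sup>+x\<in>A. ennreal (f x) \<partial>M)"
    unfolding set_lebesgue_integral_def using bounds integrable
    by (subst nn_integral_eq_integral[symmetric])
      (auto simp: set_integrable_def indicator_def intro!: nn_integral_cong)
qed

lemma ennreal_iterated_set_integral_swap:
  fixes \<psi> :: "'a \<Rightarrow> 'a \<Rightarrow> real"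
  assumes "finite_measure M" and A[measurable]: "A \<in> sets M"
    and \<psi>[measurable]: "(\<lambda>p. \<psi> (fst p) (snd p)) \<in> borel_measurable (M \<Otimes>\<^sub>M M)"
    and bounds: "\<And>u x. u \<in> A \<Longrightarrow> x \<in> A \<Longrightarrow> 0 \<le> \<psi> u x \<and> \<psi> u x \<le> B"
  shows "ennreal (LINT u:A|M. LINT x:A|M. \<psi> u x) = (\<integral>\<^sup>+x\<in>A. (\<integral>\<^sup>+u\<in>A. ennreal (\<psi> u x) \<partial>M) \<partial>M)"
proof -
  interpret finite_measure M by fact
  interpret pair_sigma_finite M M ..
  have [measurable]: "(\<lambda>p. \<psi> (snd p) (fst p)) \<in> borel_measurable (M \<Otimes>\<^sub>M M)"
    using measurable_compose[OF measurable_pair_swap' \<psi>] by (simp add: case_prod_beta)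
  have [measurable]: "(\<lambda>u. LINT x:A|M. \<psi> u x) \<in> borel_measurable M"
    unfolding set_lebesgue_integral_def by measurable
  have inner: "0 \<le> (LINT x:A|M. \<psi> u x) \<and> (LINT x:A|M. \<psi> u x) \<le> B * measure M A"
    "ennreal (LINT x:A|M. \<psi> u x) = (\<integral>\<^sup>+x\<in>A. ennreal (\<psi> u x) \<partial>M)" if "u \<in> A" for u
  proof -
    have "u \<in> space M" using A that sets.sets_into_space by blast
    then have "\<psi> u \<in> borel_measurable M" using measurable_Pair2[OF \<psi>] by simp
    then show "0 \<le> (LINT x:A|M. \<psi> u x) \<and> (LINT x:A|M. \<psi> u x) \<le> B * measure M A"
      "ennreal (LINT x:A|M. \<psi> u x) = (\<integral>\<^sup>+x\<in>A. ennreal (\<psi> u x) \<partial>M)"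
      using set_integral_bounded[OF A _ bounds[OF that]] by auto
  qed
  have "ennreal (LINT u:A|M. LINT x:A|M. \<psi> u x) = (\<integral>\<^sup>+u\<in>A. ennreal (LINT x:A|M. \<psi> u x) \<partial>M)"
    using inner(1) by (intro set_integral_bounded(3)) auto
  also have "\<dots> = (\<integral>\<^sup>+u. \<integral>\<^sup>+x. ennreal (\<psi> u x) * indicator A x * indicator A u \<partial>M \<partial>M)"
    using inner(2) by (auto simp: nn_integral_multc indicator_def intro!: nn_integral_cong)
  also have "\<dots> = (\<integral>\<^sup>+x. \<integral>\<^sup>+u. ennreal (\<psi> u x) * indicator A x * indicator A u \<partial>M \<partial>M)"
    by (rule Fubini') measurable
  also have "\<dots> = (\<integral>\<^sup>+x\<in>A. (\<integral>\<^sup>+u\<in>A. ennreal (\<psi> u x) \<partial>M) \<partial>M)"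
    by (auto simp: nn_integral_multc indicator_def intro!: nn_integral_cong)
  finally show ?thesis .
qed

lemma cball_subset_if_infdist_frontier_gt:
  fixes X :: "'a::real_normed_vector set"
  assumes x: "x \<in> X" and d: "s < infdist x (frontier X)"
  shows "cball x s \<subseteq> X"
proof
  fix y assume y: "y \<in> cball x s"
  show "y \<in> X"
  proof (rule ccontr)
    assume "y \<notin> X"
    have "0 \<le> s" using y zero_le_dist[of x y] by (simp del: zero_le_dist)
    then have "x \<in> cball x s" by simp
    have "cball x s \<inter> frontier X \<noteq> {}"
    proof (rule connected_Int_frontier)
      show "cball x s \<inter> X \<noteq> {}" using x \<open>x \<in> cball x s\<close> by blast
      show "cball x s - X \<noteq> {}" using y \<open>y \<notin> X\<close> by blast
    qed simp
    then obtain z where "z \<in> cball x s" "z \<in> frontier X" by blast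
    then have "infdist x (frontier X) \<le> s" using infdist_le[of z "frontier X" x] by simp
    with d show False by simp
  qed
qed

lemma X_s_cball:
  fixes X :: "'a::euclidean_space set"
  assumes "0 \<le> \<theta>" "0 \<le> c"
    and hoelder: "\<And>x u. x \<in> X \<Longrightarrow> u \<in> X \<Longrightarrow> \<bar>pd x - pd u\<bar> \<le> c * norm (x - u) powr \<theta>"
    and x: "x \<in> X_s X pd c \<theta> s" and u: "u \<in> cball x s"
  shows "u \<in> X" and "s powr \<theta> \<le> pd u"
proof -
  from x have "x \<in> X" "s < infdist x (frontier X)" and pd_x: "(1 + c) * s powr \<theta> \<le> pd x"
    by (auto simp: X_s_def)
  then show uX: "u \<in> X" using cball_subset_if_infdist_frontier_gt u by blast
  have "c * norm (x - u) powr \<theta> \<le> c * s powr \<theta>"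
    using u assms(1,2) by (intro mult_left_mono powr_mono2) (auto simp: dist_norm)
  with hoelder[OF \<open>x \<in> X\<close> uX] pd_x show "s powr \<theta> \<le> pd u"
    by (simp add: algebra_simps abs_le_iff)
qed

lemma nn_integral_X_s_lower_bound:
  fixes X :: "'a::euclidean_space set" and \<theta> :: real
  assumes s: "0 < s" and "0 \<le> \<theta>" "0 \<le> c"
    and hoelder: "\<And>x u. x \<in> X \<Longrightarrow> u \<in> X \<Longrightarrow> \<bar>pd x - pd u\<bar> \<le> c * norm (x - u) powr \<theta>"
    and [measurable]: "X \<in> sets borel" "pd \<in> borel_measurable borel"
    and x: "x \<in> X_s X pd c \<theta> s"
  shows "ennreal (M2_tilde TYPE('a) * s powr (real DIM('a) + 2 + \<theta>) / DIM('a) * (norm h)\<^sup>2)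
       \<le> (\<integral>\<^sup>+u\<in>X. ennreal (omega s (x - u) * (h \<bullet> (u - x))\<^sup>2) \<partial>density lborel pd)"
proof -
  let ?F = "\<lambda>u. ennreal (omega s (x - u) * (h \<bullet> (u - x))\<^sup>2)"
  have [measurable]: "cball x s \<in> sets borel" by (simp add: borel_closed)
  have [measurable]: "?F \<in> borel_measurable borel" unfolding omega_def by measurable
  have "ennreal (M2_tilde TYPE('a) * s powr (real DIM('a) + 2 + \<theta>) / DIM('a) * (norm h)\<^sup>2)
      = ennreal (s powr \<theta>) * ennreal (s ^ (DIM('a) + 2) * (norm h)\<^sup>2 / DIM('a) * M2_tilde TYPE('a))"
    using s M2_tilde_nonneg[where 'a='a]
    by (simp add: ennreal_mult[symmetric] powr_add powr_realpow power2_eq_square mult_ac)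
  also have "\<dots> = ennreal (s powr \<theta>) * (\<integral>\<^sup>+u\<in>cball x s. ?F u \<partial>lborel)"
    by (simp only: nn_integral_cball_omega_quadratic[OF s])
  also have "\<dots> = (\<integral>\<^sup>+u. ennreal (s powr \<theta>) * (?F u * indicator (cball x s) u) \<partial>lborel)"
    by (rule nn_integral_cmult[symmetric]) measurable
  also have "\<dots> \<le> (\<integral>\<^sup>+u. ennreal (pd u) * (?F u * indicator X u) \<partial>lborel)"
  proof (intro nn_integral_mono)
    fix u
    show "ennreal (s powr \<theta>) * (?F u * indicator (cball x s) u) \<le> ennreal (pd u) * (?F u * indicator X u)"
      using X_s_cball[OF assms(2,3) hoelder x, of u]
      by (cases "u \<in> cball x s") (auto intro!: mult_right_mono ennreal_leI)
  qed
  also have "\<dots> = (\<integral>\<^sup>+u\<in>X. ?F u \<partial>density lborel pd)"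
    by (rule nn_integral_density[symmetric]) measurable
  finally show ?thesis .
qed

lemma Q_fun_nonneg: "0 \<le> Q_fun X M s g f"
  unfolding Q_fun_def set_lebesgue_integral_def
  by (auto intro!: Bochner_Integration.integral_nonneg simp: omega_def indicator_def)

lemma Q_fun_eq_nn_integral:
  fixes X :: "'a::euclidean_space set" and H :: "'a \<Rightarrow> 'a"
  assumes M: "finite_measure M" and sets_M[measurable_cong]: "sets M = sets borel"
    and X: "compact X" and [measurable]: "H \<in> borel_measurable borel"
    and H_eq: "\<And>x. x \<in> X \<Longrightarrow> H x = f x - g x" and H_bound: "\<And>x. x \<in> X \<Longrightarrow> norm (H x) \<le> B"
  shows "ennreal (Q_fun X M s g f)
       = (\<integral>\<^sup>+x\<in>X. (\<integral>\<^sup>+u\<in>X. ennreal (omega s (x - u) * (H x \<bullet> (u - x))\<^sup>2) \<partial>M) \<partial>M)"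
proof -
  have [measurable]: "X \<in> sets borel" using X by (simp add: compact_imp_closed)
  obtain R where R: "\<And>x. x \<in> X \<Longrightarrow> norm x \<le> R"
    using compact_imp_bounded[OF X] unfolding bounded_iff by blast
  have bounds: "0 \<le> omega s (x - u) * (H x \<bullet> (u - x))\<^sup>2 \<and> omega s (x - u) * (H x \<bullet> (u - x))\<^sup>2 \<le> (B * (2 * R))\<^sup>2"
    if "u \<in> X" "x \<in> X" for u x
  proof -
    have "\<bar>H x \<bullet> (u - x)\<bar> \<le> norm (H x) * norm (u - x)" by (rule Cauchy_Schwarz_ineq2)
    also have "\<dots> \<le> B * (2 * R)"
      using H_bound[OF that(2)] R[OF that(1)] R[OF that(2)] norm_triangle_ineq4[of u x]
      by (intro mult_mono) (auto intro: order_trans[OF norm_ge_zero])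
    finally have "(H x \<bullet> (u - x))\<^sup>2 \<le> (B * (2 * R))\<^sup>2"
      by (metis abs_le_square_iff abs_of_nonneg abs_ge_zero order.trans)
    moreover have "0 \<le> omega s (x - u)" "omega s (x - u) \<le> 1" by (simp_all add: omega_def)
    ultimately show ?thesis
      using mult_right_mono[of "omega s (x - u)" 1 "(H x \<bullet> (u - x))\<^sup>2"] by simp
  qed
  have "Q_fun X M s g f = (LINT u:X|M. LINT x:X|M. omega s (x - u) * (H x \<bullet> (u - x))\<^sup>2)"
    unfolding Q_fun_def using H_eq sets_M
    by (intro set_lebesgue_integral_cong allI impI) simp_all
  also have "ennreal \<dots>
      = (\<integral>\<^sup>+x\<in>X. (\<integral>\<^sup>+u\<in>X. ennreal (omega s (x - u) * (H x \<bullet> (u - x))\<^sup>2) \<partial>M) \<partial>M)"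
  proof (rule ennreal_iterated_set_integral_swap[OF M])
    show "(\<lambda>p. omega s (snd p - fst p) * (H (snd p) \<bullet> (fst p - snd p))\<^sup>2) \<in> borel_measurable (M \<Otimes>\<^sub>M M)"
      unfolding omega_def by measurable
  qed (use bounds sets_M in auto)
  finally show ?thesis .
qed

lemma Q_fun_lower_bound:
  fixes X :: "'a::euclidean_space set" and \<theta> :: real
  assumes M: "finite_measure M" "M = density lborel pd" and X: "compact X"
    and [measurable]: "pd \<in> borel_measurable borel"
    and s: "0 < s" and "0 \<le> \<theta>" "0 \<le> c"
    and hoelder: "\<And>x u. x \<in> X \<Longrightarrow> u \<in> X \<Longrightarrow> \<bar>pd x - pd u\<bar> \<le> c * norm (x - u) powr \<theta>"
    and restrict_measurable: "(\<lambda>x. indicator X x *\<^sub>R (f x - g x)) \<in> borel_measurable borel"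
    and bound: "\<And>x. x \<in> X \<Longrightarrow> norm (f x - g x) \<le> B"
  shows "M2_tilde TYPE('a) * s powr (real DIM('a) + 2 + \<theta>) / real DIM('a)
           * (LINT x:X_s X pd c \<theta> s|M. (norm (f x - g x))\<^sup>2)
         \<le> Q_fun X M s g f"
proof -
  define H where "H x = indicator X x *\<^sub>R (f x - g x)" for x
  define C where "C = M2_tilde TYPE('a) * s powr (real DIM('a) + 2 + \<theta>) / real DIM('a)"
  define Xs where "Xs = X_s X pd c \<theta> s"
  have sets_M [measurable_cong]: "sets M = sets borel" using M(2) by simp
  have H_X: "H x = f x - g x" if "x \<in> X" for x using that by (simp add: H_def)
  have [measurable]: "H \<in> borel_measurable borel" unfolding H_def by (fact restrict_measurable)
  have [measurable]: "X \<in> sets borel" using X by (simp add: compact_imp_closed)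
  have [measurable]: "(\<lambda>x::'a. infdist x (frontier X)) \<in> borel_measurable borel"
    by (intro borel_measurable_continuous_onI continuous_intros)
  have [measurable]: "Xs \<in> sets borel" unfolding Xs_def X_s_def by measurable
  have Q: "ennreal (Q_fun X M s g f)
      = (\<integral>\<^sup>+x\<in>X. (\<integral>\<^sup>+u\<in>X. ennreal (omega s (x - u) * (H x \<bullet> (u - x))\<^sup>2) \<partial>M) \<partial>M)"
    using bound H_X by (intro Q_fun_eq_nn_integral[OF M(1) sets_M X]) auto
  have "Xs \<subseteq> X" by (auto simp: Xs_def X_s_def)
  then have "C * (LINT x:Xs|M. (norm (f x - g x))\<^sup>2) = (LINT x:Xs|M. C * (norm (H x))\<^sup>2)"
    using H_X sets_M by (auto intro!: set_lebesgue_integral_cong)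
  also have "\<dots> = enn2real (\<integral>\<^sup>+x\<in>Xs. ennreal (C * (norm (H x))\<^sup>2) \<partial>M)"
    using M2_tilde_nonneg[where 'a='a]
    by (intro set_integral_eq_enn2real_set_nn_integral) (auto simp: C_def)
  also have "\<dots> \<le> enn2real (ennreal (Q_fun X M s g f))"
  proof (rule enn2real_mono)
    show "(\<integral>\<^sup>+x\<in>Xs. ennreal (C * (norm (H x))\<^sup>2) \<partial>M) \<le> ennreal (Q_fun X M s g f)"
      unfolding Q
    proof (rule nn_integral_mono)
      fix x
      show "ennreal (C * (norm (H x))\<^sup>2) * indicator Xs x
          \<le> (\<integral>\<^sup>+u\<in>X. ennreal (omega s (x - u) * (H x \<bullet> (u - x))\<^sup>2) \<partial>M) * indicator X x"
        using nn_integral_X_s_lower_bound[OF s assms(6,7) hoelder, where x = x and h = "H x"] \<open>Xs \<subseteq> X\<close>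
        by (cases "x \<in> Xs") (auto simp: Xs_def C_def M(2))
    qed
  qed simp
  also have "\<dots> = Q_fun X M s g f" by (simp add: Q_fun_nonneg)
  finally show ?thesis unfolding C_def Xs_def .
qed

theorem lemma1:
  fixes X :: "'a::euclidean_space set"
    and \<rho> :: "('a \<times> real) measure"
    and f\<^sub>\<rho> :: "'a \<Rightarrow> real"
    and grad :: "'a \<Rightarrow> 'a"
    and K :: "'a \<Rightarrow> 'a \<Rightarrow> real"
    and pd :: "'a \<Rightarrow> real"
    and c\<^sub>\<rho> \<theta> s r :: real
    and f :: "'a \<Rightarrow> 'a"
  assumes "compact X"
    and "prob_space \<rho>" and "sets \<rho> = sets borel" and "emeasure \<rho> (X \<times> UNIV) = 1"
    and "integrable \<rho> snd"
    and "f\<^sub>\<rho> \<in> borel_measurable borel"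
    and "\<And>A. A \<in> sets borel \<Longrightarrow>
           (LINT z:(A \<times> UNIV)|\<rho>. snd z) = (LINT x:A|distr \<rho> borel fst. f\<^sub>\<rho> x)"
    and "mercer_kernel X K"
    and "c\<^sub>\<rho> > 0" and "0 < \<theta>" and "\<theta> \<le> 1"
    and "\<And>t. t > 0 \<Longrightarrow>
           measure (distr \<rho> borel fst) {x\<in>X. infdist x (frontier X) < t} \<le> c\<^sub>\<rho> * t"
    and "pd \<in> borel_measurable borel" and "\<And>x. pd x \<ge> 0"
    and "distr \<rho> borel fst = density lborel (\<lambda>x. ennreal (pd x))"
    and "\<And>x. x \<in> X \<Longrightarrow> pd x \<le> c\<^sub>\<rho>"
    and "\<And>x u. x \<in> X \<Longrightarrow> u \<in> X \<Longrightarrow> \<bar>pd x - pd u\<bar> \<le> c\<^sub>\<rho> * norm (x - u) powr \<theta>"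
    and "\<And>x. x \<in> X \<Longrightarrow> (f\<^sub>\<rho> has_derivative (\<lambda>h. grad x \<bullet> h)) (at x within X)"
    and "\<And>i. i \<in> Basis \<Longrightarrow> in_rkhs X K (\<lambda>x. grad x \<bullet> i)"
    and "s > 0" and "r \<ge> 1" and "f \<in> F_ball X K r"
  shows "M2_tilde TYPE('a) * s powr (real DIM('a) + 2 + \<theta>) / real DIM('a)
           * (LINT x:(X_s X pd c\<^sub>\<rho> \<theta> s)|distr \<rho> borel fst. (norm (f x - grad x))\<^sup>2)
         \<le> Q_fun X (distr \<rho> borel fst) s grad f"
proof -
  note X = \<open>compact X\<close> and K = \<open>mercer_kernel X K\<close>
  note grad_rkhs = \<open>\<And>i. i \<in> Basis \<Longrightarrow> in_rkhs X K (\<lambda>x. grad x \<bullet> i)\<close>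
  have f_rkhs: "\<And>i. i \<in> Basis \<Longrightarrow> in_rkhs X K (\<lambda>x. f x \<bullet> i)"
    using \<open>f \<in> F_ball X K r\<close> by (simp add: F_ball_def)
  obtain Bf where Bf: "\<And>x. x \<in> X \<Longrightarrow> norm (f x) \<le> Bf"
    using rkhs_field_bounded[OF X K f_rkhs] by blast
  obtain Bg where Bg: "\<And>x. x \<in> X \<Longrightarrow> norm (grad x) \<le> Bg"
    using rkhs_field_bounded[OF X K grad_rkhs] by blast
  have "norm (f x - grad x) \<le> Bf + Bg" if "x \<in> X" for x
    using norm_triangle_ineq4[of "f x" "grad x"] Bf[OF that] Bg[OF that] by simp
  moreover have "(\<lambda>x. indicator X x *\<^sub>R (f x - grad x)) \<in> borel_measurable borel"
    using rkhs_field_borel_measurable[OF X K f_rkhs] rkhs_field_borel_measurable[OF X K grad_rkhs]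
    by (simp add: scaleR_diff_right)
  moreover have "fst \<in> measurable \<rho> borel"
    by (simp add: measurable_cong_sets[OF \<open>sets \<rho> = sets borel\<close> refl]
        borel_measurable_continuous_onI continuous_on_fst)
  then have "finite_measure (distr \<rho> borel fst)"
    using prob_space.prob_space_distr[OF \<open>prob_space \<rho>\<close>] prob_space.finite_measure by blast
  ultimately show ?thesis
    using assms(9,10,13,15,17,20) by (intro Q_fun_lower_bound[OF _ _ X]) auto
qed

end
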